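(* Let $\mathbf{k}$ be an algebraically closed field of prime characteristic $p$, and let $R(p)$ be the Radford algebra over $\mathbf{k}$. Then for every positive integer $n$, the $n$-th higher Frobenius–Schur indicator of $R(p)$ is \[ \nu_n(R(p))=\begin{cases} 1 & \text{if } n\not\equiv 0 \pmod p,\\ 0 & \text{if } n\equiv 0 \pmod p.\end{cases} \]
   Context: The Radford algebra $R(p)$ is the Hopf algebra over $\mathbf{k}$ generated as an algebra by $g,x$ subject to the relations $g^p=1$, $x^p=x$, $gx-xg=g^2-g$ if $p>2$, and $g^2=1$, $x^2=x$, $gx-xg=1-g$ if $p=2$; its coalgebra structure is given by $\Delta(g)=g\otimes g$, $\Delta(x)=x\otimes 1+g\otimes x$, $\varepsilon(g)=1$, $\varepsilon(x)=0$. It has dimension $p^2$ with basis $\{g^ix^j : 0\le i,j\le p-1\}$. For a finite-dimensional Hopf algebra $H$ with multiplication $m$, comultiplication $\Delta$, counit $\varepsilon$ and antipode $S$: let $\Delta^{(1)}=\mathrm{id}$, $\Delta^{(n)}=(\Delta^{(n-1)}\otimes\mathrm{id})\circ\Delta$ for $n\ge 2$, let $m^{(n)}(h_1\otimes\cdots\otimes h_n)=h_1\cdots h_n$, and define the Sweedler power maps $P_0(h)=\varepsilon(h)1_H$ and $P_n=m^{(n)}\circ\Delta^{(n)}$ for $n\ge1$. The $n$-th (higher Frobenius–Schur) indicator of $H$ is $\nu_n(H)=\mathrm{Tr}(S\circ P_{n-1})\in\mathbf{k}$, the trace of the linear map $S\circ P_{n-1}:H\to H$. *)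

theory Defs
  imports Main "HOL-Computational_Algebra.Polynomial"
begin

text \<open>
  An element of R(p) is represented by its coordinate function with respect to
  the basis g^i x^j (0 <= i,j <= p-1): the coordinate of g^i x^j is v (i,j).
  Elements of the tensor power R(p)^(tensor n) are coordinate functions on
  length-n lists of basis indices; R(p) tensor R(p) uses pairs of basis indices.
\<close>

type_synonym 'k rvec = "nat \<times> nat \<Rightarrow> 'k"
type_synonym 'k rtens = "(nat \<times> nat) \<times> (nat \<times> nat) \<Rightarrow> 'k"

definition rbasis :: "nat \<Rightarrow> (nat \<times> nat) set" where
  "rbasis p = {0..<p} \<times> {0..<p}"

text \<open>Reduction of exponents of x using x^p = x (x^j = x^((j-1) mod (p-1) + 1) for j >= 1).\<close>
definition xexp :: "nat \<Rightarrow> nat \<Rightarrow> nat" where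
  "xexp p j = (if j < p then j else ((j - 1) mod (p - 1)) + 1)"

text \<open>The element g^i x^j (exponents reduced using g^p = 1 and x^p = x).\<close>
definition rmon :: "nat \<Rightarrow> nat \<Rightarrow> nat \<Rightarrow> 'k::field rvec" where
  "rmon p i j = (\<lambda>b. if b = (i mod p, xexp p j) then 1 else 0)"

definition rone :: "nat \<Rightarrow> 'k::field rvec" where
  "rone p = rmon p 0 0"

definition lmulG :: "nat \<Rightarrow> 'k::field rvec \<Rightarrow> 'k rvec" where
  "lmulG p v = (\<lambda>b. \<Sum>(i,j)\<in>rbasis p. v (i,j) * rmon p (i+1) j b)"

text \<open>Left multiplication by x, using the relation  x g^i = g^i x + i (g^i - g^(i+1)),
  which follows from  g x - x g = g^2 - g  by induction on i:
  x (g^i x^j) = g^i x^(j+1) + i g^i x^j - i g^(i+1) x^j.\<close>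
definition lmulX :: "nat \<Rightarrow> 'k::field rvec \<Rightarrow> 'k rvec" where
  "lmulX p v = (\<lambda>b. \<Sum>(i,j)\<in>rbasis p. v (i,j) *
      (rmon p i (j+1) b + of_nat i * rmon p i j b - of_nat i * rmon p (i+1) j b))"

definition rmult :: "nat \<Rightarrow> 'k::field rvec \<Rightarrow> 'k rvec \<Rightarrow> 'k rvec" where
  "rmult p u v = (\<lambda>b. \<Sum>(i,j)\<in>rbasis p. u (i,j) * ((lmulG p ^^ i) ((lmulX p ^^ j) v)) b)"

definition rpow :: "nat \<Rightarrow> 'k::field rvec \<Rightarrow> nat \<Rightarrow> 'k rvec" where
  "rpow p v k = ((rmult p v) ^^ k) (rone p)"

definition rG :: "nat \<Rightarrow> 'k::field rvec" where "rG p = rmon p 1 0"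
definition rX :: "nat \<Rightarrow> 'k::field rvec" where "rX p = rmon p 0 1"

definition rtensor :: "'k::field rvec \<Rightarrow> 'k rvec \<Rightarrow> 'k rtens" where
  "rtensor u v = (\<lambda>(e,f). u e * v f)"

definition tmult :: "nat \<Rightarrow> 'k::field rtens \<Rightarrow> 'k rtens \<Rightarrow> 'k rtens" where
  "tmult p U V = (\<lambda>(e,f). \<Sum>a\<in>rbasis p. \<Sum>b\<in>rbasis p. \<Sum>c\<in>rbasis p. \<Sum>d\<in>rbasis p.
      U (a,b) * V (c,d) * rmult p (rmon p (fst a) (snd a)) (rmon p (fst c) (snd c)) e
        * rmult p (rmon p (fst b) (snd b)) (rmon p (fst d) (snd d)) f)"

definition tpow :: "nat \<Rightarrow> 'k::field rtens \<Rightarrow> nat \<Rightarrow> 'k rtens" where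
  "tpow p T k = ((tmult p T) ^^ k) (rtensor (rone p) (rone p))"

text \<open>Comultiplication: Delta(g) = g tensor g, Delta(x) = x tensor 1 + g tensor x,
  extended as an algebra map:  Delta(g^i x^j) = Delta(g)^i Delta(x)^j, and linearly.\<close>
definition DeltaG :: "nat \<Rightarrow> 'k::field rtens" where
  "DeltaG p = rtensor (rG p) (rG p)"

definition DeltaX :: "nat \<Rightarrow> 'k::field rtens" where
  "DeltaX p = (\<lambda>ef. rtensor (rX p) (rone p) ef + rtensor (rG p) (rX p) ef)"

definition rDelta :: "nat \<Rightarrow> 'k::field rvec \<Rightarrow> 'k rtens" where
  "rDelta p v = (\<lambda>ef. \<Sum>(i,j)\<in>rbasis p. v (i,j) *
      tmult p (tpow p (DeltaG p) i) (tpow p (DeltaX p) j) ef)"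

definition reps :: "nat \<Rightarrow> 'k::field rvec \<Rightarrow> 'k" where
  "reps p v = (\<Sum>(i,j)\<in>rbasis p. v (i,j) * (if j = 0 then 1 else 0))"

text \<open>Antipode: the algebra anti-homomorphism with S(g) = g^(-1) = g^(p-1) and
  S(x) = - g^(-1) x, i.e.  S(g^i x^j) = S(x)^j S(g)^i, extended linearly.\<close>
definition rS :: "nat \<Rightarrow> 'k::field rvec \<Rightarrow> 'k rvec" where
  "rS p v = (\<lambda>b. \<Sum>(i,j)\<in>rbasis p. v (i,j) *
      rmult p (rpow p (\<lambda>c. - rmon p (p - 1) 1 c) j) (rpow p (rmon p (p - 1) 0) i) b)"

text \<open>Iterated comultiplication Delta^(n) : H -> H^(tensor n), n >= 1, with
  Delta^(1) = id and Delta^(n) = (Delta^(n-1) tensor id) o Delta.\<close>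
fun rDeltan :: "nat \<Rightarrow> nat \<Rightarrow> 'k::field rvec \<Rightarrow> (nat \<times> nat) list \<Rightarrow> 'k" where
  "rDeltan p 0 v bs = 0"
| "rDeltan p (Suc 0) v bs = (case bs of [b] \<Rightarrow> v b | _ \<Rightarrow> 0)"
| "rDeltan p (Suc (Suc n)) v bs = (if bs = [] then 0 else
      (\<Sum>c\<in>rbasis p. rDelta p v (c, last bs) *
          rDeltan p (Suc n) (rmon p (fst c) (snd c)) (butlast bs)))"

fun rprod :: "nat \<Rightarrow> (nat \<times> nat) list \<Rightarrow> 'k::field rvec" where
  "rprod p [] = rone p"
| "rprod p (b # bs) = rmult p (rmon p (fst b) (snd b)) (rprod p bs)"

text \<open>Sweedler power maps: P_0(h) = epsilon(h) 1, P_n = m^(n) o Delta^(n).\<close>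
definition rP :: "nat \<Rightarrow> nat \<Rightarrow> 'k::field rvec \<Rightarrow> 'k rvec" where
  "rP p n v = (if n = 0 then (\<lambda>b. reps p v * rone p b)
     else (\<lambda>b. \<Sum>bs\<in>{bs. set bs \<subseteq> rbasis p \<and> length bs = n}.
                 rDeltan p n v bs * rprod p bs b))"

definition rtrace :: "nat \<Rightarrow> ('k::field rvec \<Rightarrow> 'k rvec) \<Rightarrow> 'k" where
  "rtrace p f = (\<Sum>(i,j)\<in>rbasis p. f (rmon p i j) (i,j))"

definition radford_indicator :: "nat \<Rightarrow> nat \<Rightarrow> 'k::field" where
  "radford_indicator p n = rtrace p (\<lambda>v. rS p (rP p (n - 1) v))"

end

theory Submission
  imports Defs "HOL-Number_Theory.Cong"
begin

(* Since gx - xg = g^2 - g has lower x-degree, the x-degree filtration of R(p) is multiplicative: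
   as long as degrees stay below p, the coefficient of the top power of x, an element of the group
   algebra k[g] = k[X]/(X^p - 1), of a product is the product of the top coefficients. Building
   Delta^(n-1) one comultiplication at a time from Delta(g) = g (x) g and Delta(x) = x (x) 1 + g (x) x,
   the Sweedler power P_(n-1)(g^i x^j) has x-degree j and top coefficient
   g^((n-1)i) (1 + g + ... + g^(n-2))^j, while the (g^i x^j)-coordinate of S(v), for v of x-degree j
   with top coefficient Q, is (-1)^j times the g^0-coefficient of g^(i+j) Q. Hence
   nu_n = sum_(j<p) (-1)^j [g^0] (E A_j) with E = sum_(i<p) g^(ni) and A_j = g^j (1 + ... + g^(n-2))^j.
   If p divides n, then E = p = 0. Otherwise E is the norm element N = sum_a g^a, and N A = A(1) N
   gives nu_n = sum_(j<p) (1 - n)^j, a geometric sum equal to 1 because (1 - n)^p = 1 - n != 1. *)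

section \<open>Residues and finite sums\<close>

lemma add_mod_eq_iff:
  fixes a k p s :: nat
  assumes "a < p" "s < p"
  shows "(k + a) mod p = s \<longleftrightarrow> a = (s + p - k mod p) mod p"
proof -
  have r: "k mod p < p" using assms by simp
  have "(k + a) mod p = s \<longleftrightarrow> [k mod p + a = s + p] (mod p)"
    using assms by (simp add: cong_def mod_add_left_eq)
  also have "\<dots> \<longleftrightarrow> [a = s + p - k mod p] (mod p)"
    using r by (metis add.commute cong_add_rcancel_nat le_add_diff_inverse2 less_imp_le_nat trans_less_add2 assms(2))
  also have "\<dots> \<longleftrightarrow> a = (s + p - k mod p) mod p"
    using assms by (simp add: cong_def)
  finally show ?thesis .
qed

lemma pred_mult_mod_eq_iff:
  fixes i p t :: nat
  assumes "i < p"
  shows "((p - 1) * t) mod p = i \<longleftrightarrow> (i + t) mod p = 0"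
proof -
  have "((p - 1) * t) mod p = i \<longleftrightarrow> [(p - 1) * t + t = i + t] (mod p)"
    using assms by (simp add: cong_def cong_add_rcancel_nat[unfolded cong_def])
  also have "(p - 1) * t + t = p * t" using assms by (cases p) auto
  finally show ?thesis by (simp add: cong_def)
qed

lemma sum_lessThan_permute:
  fixes f :: "nat \<Rightarrow> nat"
  assumes "inj_on f {..<p}" and "\<And>i. i < p \<Longrightarrow> f i < p"
  shows "(\<Sum>i<p. g (f i)) = (\<Sum>i<p. g i)"
proof -
  have "f ` {..<p} = {..<p}" by (rule endo_inj_surj) (use assms in auto)
  thus ?thesis using sum.reindex[OF assms(1), of g] by simp
qed

lemma inj_on_add_mod: "inj_on (\<lambda>i. (i + k) mod p) {..<p :: nat}"
  by (rule inj_onI) (metis cong_add_rcancel_nat cong_def cong_less_modulus_unique_nat lessThan_iff)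

lemma inj_on_mult_mod:
  assumes "prime p" "\<not> p dvd n"
  shows "inj_on (\<lambda>i. (n * i) mod p) {..<p :: nat}"
proof (rule inj_onI)
  fix i i' assume "i \<in> {..<p}" "i' \<in> {..<p}" "(n * i) mod p = (n * i') mod p"
  moreover have "coprime n p"
    using assms prime_imp_coprime coprime_commute by blast
  ultimately show "i = i'"
    by (metis cong_def cong_mult_lcancel_nat cong_less_modulus_unique_nat lessThan_iff)
qed

lemma double_sum_delta:
  "(i0::nat) < p \<Longrightarrow> (j0::nat) < q \<Longrightarrow>
   (\<Sum>i<p. \<Sum>j<q. if i = i0 \<and> j = j0 then f i j else 0) = (f i0 j0 :: 'a::comm_monoid_add)"
proof -
  assume "i0 < p" "j0 < q"
  hence "(\<Sum>i<p. \<Sum>j<q. if i = i0 \<and> j = j0 then f i j else 0) = (\<Sum>i<p. if i = i0 then f i j0 else 0)"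
    by (intro sum.cong refl) auto
  thus ?thesis using \<open>i0 < p\<close> by simp
qed

lemma double_sum_delta_set:
  "x0 \<in> A \<Longrightarrow> y0 \<in> B \<Longrightarrow> finite A \<Longrightarrow> finite B \<Longrightarrow>
   (\<Sum>x\<in>A. \<Sum>y\<in>B. if x = x0 \<and> y = y0 \<and> C then X else 0) = (if C then X else (0::'a::comm_monoid_add))"
proof -
  assume h: "x0 \<in> A" "y0 \<in> B" "finite A" "finite B"
  hence "(\<Sum>x\<in>A. \<Sum>y\<in>B. if x = x0 \<and> y = y0 \<and> C then X else 0)
       = (\<Sum>x\<in>A. if x = x0 then (if C then X else 0) else 0)"
    by (intro sum.cong refl) auto
  thus ?thesis using h by simp
qed

lemma sum_product_sum_sum:
  "(\<Sum>a\<in>A. \<Sum>b\<in>B. F a b) * (\<Sum>c\<in>C. \<Sum>d\<in>D. G c d) =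
   (\<Sum>a\<in>A. \<Sum>b\<in>B. \<Sum>c\<in>C. \<Sum>d\<in>D. F a b * (G c d :: 'a::comm_semiring_1))"
  by (simp only: sum_distrib_right) (simp only: sum_distrib_left)

lemma triple_sum_reverse:
  "(\<Sum>x\<in>A. \<Sum>y\<in>B. \<Sum>z\<in>C. f x y z) = (\<Sum>z\<in>C. \<Sum>y\<in>B. \<Sum>x\<in>A. f x y z)"
proof -
  have "(\<Sum>x\<in>A. \<Sum>y\<in>B. \<Sum>z\<in>C. f x y z) = (\<Sum>x\<in>A. \<Sum>z\<in>C. \<Sum>y\<in>B. f x y z)"
    by (rule sum.cong[OF refl], rule sum.swap)
  also have "\<dots> = (\<Sum>z\<in>C. \<Sum>x\<in>A. \<Sum>y\<in>B. f x y z)" by (rule sum.swap)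
  also have "\<dots> = (\<Sum>z\<in>C. \<Sum>y\<in>B. \<Sum>x\<in>A. f x y z)" by (rule sum.cong[OF refl], rule sum.swap)
  finally show ?thesis .
qed

lemma of_nat_power_CHAR: "prime CHAR('a::comm_ring_1) \<Longrightarrow> (of_nat m :: 'a) ^ CHAR('a) = of_nat m"
proof (induction m)
  case (Suc m)
  have "(1 + of_nat m :: 'a) ^ CHAR('a) = 1 ^ CHAR('a) + of_nat m ^ CHAR('a)"
    using Suc by (intro freshmans_dream) auto
  thus ?case using Suc by simp
qed (simp add: power_0_left)

lemma neg_of_nat_power_CHAR:
  assumes "prime CHAR('a::comm_ring_1)"
  shows "(- of_nat m :: 'a) ^ CHAR('a) = - of_nat m"
  using minus_power_prime_CHAR[OF refl assms, of "of_nat m"] of_nat_power_CHAR[OF assms] by simp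

lemma sum_powers_of_fixed_point:
  fixes x :: "'a::field"
  assumes "x ^ p = x" and "x \<noteq> 1"
  shows "(\<Sum>j<p. x ^ j) = 1"
proof -
  have "(x - 1) * (\<Sum>j<p. x ^ j) = (x - 1) * 1"
    using power_diff_1_eq[of x p] assms(1) by simp
  thus ?thesis using assms(2) by simp
qed

section \<open>The group algebra of \<open>C\<^sub>p\<close> as polynomials modulo \<open>X\<^sup>p - 1\<close>\<close>

definition xpow_minus_one :: "nat \<Rightarrow> 'k::field poly" where
  "xpow_minus_one p = monom 1 p - 1"

lemma degree_xpow_minus_one: "0 < p \<Longrightarrow> degree (xpow_minus_one p :: 'k::field poly) = p"
  unfolding xpow_minus_one_def
  by (subst diff_conv_add_uminus, subst degree_add_eq_left) (auto simp: degree_monom_eq)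

lemma xpow_minus_one_nonzero: "0 < p \<Longrightarrow> (xpow_minus_one p :: 'k::field poly) \<noteq> 0"
  using degree_xpow_minus_one[of p] by (metis degree_0 neq0_conv)

lemma sum_mod_poly: "(\<Sum>x\<in>A. f x) mod (m::'k::field poly) = (\<Sum>x\<in>A. f x mod m)"
  by (induction A rule: infinite_finite_induct) (auto simp: poly_mod_add_left)

lemma smult_sum_right: "smult c (\<Sum>i\<in>A. f i) = (\<Sum>i\<in>A. smult c (f i))"
  by (induction A rule: infinite_finite_induct) (auto simp: smult_add_right)

lemma monom_mult_eq_smult: "monom (c::'a::comm_ring_1) i * Q = smult c (monom 1 i * Q)"
proof -
  have "monom c i = smult c (monom 1 i)" by (simp add: smult_monom)
  thus ?thesis by simp
qed

lemma neg_monom_power: "(- monom (1::'a::comm_ring_1) q) ^ k = smult ((-1) ^ k) (monom 1 (q * k))"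
proof (induction k)
  case (Suc k)
  have "(- monom (1::'a) q) ^ Suc k = - (monom 1 q * smult ((-1) ^ k) (monom 1 (q * k)))"
    using Suc by simp
  thus ?case by (simp add: mult_monom)
qed simp

lemma mod_xpow_minus_one_small:
  "0 < p \<Longrightarrow> degree P < p \<Longrightarrow> P mod xpow_minus_one p = (P :: 'k::field poly)"
  by (intro mod_poly_less) (simp add: degree_xpow_minus_one)

lemma one_mod_xpow_minus_one: "0 < p \<Longrightarrow> 1 mod xpow_minus_one p = (1 :: 'k::field poly)"
  by (simp add: mod_xpow_minus_one_small)

lemma power_mod_periodic:
  fixes u M :: "'a::euclidean_semiring_cancel"
  assumes up: "u ^ p mod M = 1 mod M"
  shows "u ^ k mod M = u ^ (k mod p) mod M"
proof -
  have "u ^ k = (u ^ p) ^ (k div p) * u ^ (k mod p)"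
    by (metis div_mult_mod_eq power_add power_mult mult.commute)
  also have "\<dots> mod M = ((u ^ p mod M) ^ (k div p) mod M * u ^ (k mod p)) mod M"
    by (subst power_mod) (rule mod_mult_left_eq[symmetric])
  also have "(u ^ p mod M) ^ (k div p) mod M = 1 mod M"
    unfolding up by (simp only: power_mod power_one)
  finally show ?thesis
    by (simp only: mod_mult_left_eq mult_1)
qed

lemma monom_mod_xpow_minus_one:
  assumes "0 < p"
  shows "monom 1 k mod xpow_minus_one p = (monom 1 (k mod p) :: 'k::field poly)"
proof -
  have "monom 1 p mod xpow_minus_one p = 1 mod (xpow_minus_one p :: 'k poly)"
    by (simp add: xpow_minus_one_def mod_eq_dvd_iff)
  hence "monom 1 1 ^ k mod xpow_minus_one p = monom 1 1 ^ (k mod p) mod (xpow_minus_one p :: 'k poly)"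
    by (intro power_mod_periodic) (simp add: monom_power)
  thus ?thesis
    using assms by (simp add: monom_power mod_xpow_minus_one_small degree_monom_eq)
qed

lemma coeff_monom_mod_xpow_minus_one:
  "s < p \<Longrightarrow> coeff (monom c k mod xpow_minus_one p) s = (if k mod p = s then c else (0::'k::field))"
  by (simp add: monom_mult_eq_smult[of c k 1, simplified] mod_smult_left
      monom_mod_xpow_minus_one coeff_monom)

lemma coeff_sum_monom_mod_xpow_minus_one:
  "s < p \<Longrightarrow> coeff ((\<Sum>b\<in>A. monom (c b) (f b)) mod xpow_minus_one p) s
     = (\<Sum>b\<in>A. if f b mod p = s then c b else (0::'k::field))"
  by (simp add: sum_mod_poly coeff_sum coeff_monom_mod_xpow_minus_one)

lemma mod_xpow_minus_one_eq_sum: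
  assumes "0 < p"
  shows "P mod xpow_minus_one p = (\<Sum>a<p. monom (coeff (P mod xpow_minus_one p) a) a :: 'k::field poly)"
proof -
  have "degree (P mod xpow_minus_one p) < p"
    using assms degree_mod_less'[OF xpow_minus_one_nonzero[OF assms], of P]
    by (cases "P mod xpow_minus_one p = 0") (auto simp: degree_xpow_minus_one)
  hence "degree (P mod xpow_minus_one p) \<le> p - 1" by simp
  moreover have "{..p - 1} = {..<p}" using assms by auto
  ultimately show ?thesis
    using poly_as_sum_of_monoms'[of "P mod xpow_minus_one p" "p - 1"] by simp
qed

lemma coeff_monom_mult_mod_xpow_minus_one:
  assumes "s < p"
  shows "coeff ((monom 1 k * P) mod xpow_minus_one p) s
       = coeff (P mod xpow_minus_one p) ((s + p - k mod p) mod p)"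
proof -
  let ?M = "xpow_minus_one p" and ?c = "\<lambda>a. coeff (P mod xpow_minus_one p) a"
  have p: "0 < p" using assms by simp
  have "(monom 1 k * P) mod ?M = (monom 1 k * (P mod ?M)) mod ?M"
    by (simp add: mod_mult_right_eq)
  also have "monom 1 k * (P mod ?M) = (\<Sum>a<p. monom (?c a) (k + a))"
    by (subst mod_xpow_minus_one_eq_sum[OF p]) (simp add: sum_distrib_left mult_monom)
  finally have "coeff ((monom 1 k * P) mod ?M) s = (\<Sum>a<p. if (k + a) mod p = s then ?c a else 0)"
    using assms by (simp add: coeff_sum_monom_mod_xpow_minus_one)
  also have "\<dots> = (\<Sum>a<p. if a = (s + p - k mod p) mod p then ?c a else 0)"
    using assms by (intro sum.cong refl) (simp add: add_mod_eq_iff)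
  finally show ?thesis using p by simp
qed

definition norm_poly :: "nat \<Rightarrow> 'k::field poly" where
  "norm_poly p = (\<Sum>i<p. monom 1 i)"

lemma norm_poly_mult_monom_mod:
  assumes "0 < p"
  shows "(norm_poly p * monom 1 k) mod xpow_minus_one p = (norm_poly p :: 'k::field poly)"
proof -
  have "(norm_poly p * monom 1 k) mod xpow_minus_one p = (\<Sum>i<p. monom (1::'k) ((i + k) mod p))"
    unfolding norm_poly_def sum_distrib_right sum_mod_poly
    by (simp add: mult_monom monom_mod_xpow_minus_one[OF assms])
  also have "\<dots> = norm_poly p" unfolding norm_poly_def
    by (rule sum_lessThan_permute[OF inj_on_add_mod, of p k "monom 1"]) (use assms in auto)
  finally show ?thesis .
qed

text \<open>The norm element absorbs every group element, so it turns a polynomial into its augmentation.\<close>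

lemma norm_poly_mult_mod:
  assumes "0 < p"
  shows "(norm_poly p * A) mod xpow_minus_one p = smult (poly A 1) (norm_poly p :: 'k::field poly)"
proof -
  have "norm_poly p * A = (\<Sum>k\<le>degree A. smult (coeff A k) (norm_poly p * monom 1 k))"
    by (subst (1) poly_as_sum_of_monoms[symmetric])
       (simp add: sum_distrib_left mult.commute[of "norm_poly p"] monom_mult_eq_smult[of "coeff A _"])
  hence "(norm_poly p * A) mod xpow_minus_one p = (\<Sum>k\<le>degree A. smult (coeff A k) (norm_poly p))"
    by (simp add: sum_mod_poly mod_smult_left norm_poly_mult_monom_mod[OF assms])
  also have "\<dots> = smult (poly A 1) (norm_poly p)" by (simp add: smult_sum poly_altdef)
  finally show ?thesis .
qed

lemma coeff_norm_poly_0: "0 < p \<Longrightarrow> coeff (norm_poly p :: 'k::field poly) 0 = 1"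
  unfolding norm_poly_def coeff_sum by simp

lemma sum_monom_mult_mod_xpow_minus_one:
  assumes "prime p"
  shows "(\<Sum>i<p. monom 1 (n * i)) mod xpow_minus_one p
       = (if p dvd n then of_nat p else norm_poly p :: 'k::field poly)"
proof -
  have p: "0 < p" using assms prime_gt_0_nat by blast
  have "(\<Sum>i<p. monom 1 (n * i)) mod xpow_minus_one p = (\<Sum>i<p. monom (1::'k) ((n * i) mod p))"
    by (simp add: sum_mod_poly monom_mod_xpow_minus_one[OF p])
  also have "\<dots> = (if p dvd n then of_nat p else norm_poly p)"
  proof (cases "p dvd n")
    case False
    show ?thesis unfolding norm_poly_def using False p
      by (simp add: sum_lessThan_permute[OF inj_on_mult_mod[OF assms False], of "monom 1"])
  qed simp
  finally show ?thesis .
qed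

section \<open>The \<open>x\<close>-degree filtration of \<open>R(p)\<close>\<close>

lemma finite_rbasis: "finite (rbasis p)"
  by (simp add: rbasis_def)

lemma sum_rbasis: "(\<Sum>(i,j)\<in>rbasis p. f i j) = (\<Sum>i<p. \<Sum>j<p. f i j)"
  unfolding rbasis_def by (simp add: sum.cartesian_product lessThan_atLeast0)

definition xdeg_le :: "nat \<Rightarrow> nat \<Rightarrow> 'k::field rvec \<Rightarrow> bool" where
  "xdeg_le p d v = (\<forall>a<p. \<forall>j<p. d < j \<longrightarrow> v (a,j) = 0)"

text \<open>The coefficient of \<open>x\<^sup>d\<close> in an element of \<open>R(p)\<close> lies in the group algebra
  \<open>k[g] \<cong> k[X]/(X\<^sup>p - 1)\<close>; \<open>xlead p d P v\<close> says that \<open>v\<close> has \<open>x\<close>-degree at most \<open>d\<close>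
  and that this coefficient is the class of \<open>P\<close>.\<close>

definition xlead :: "nat \<Rightarrow> nat \<Rightarrow> 'k::field poly \<Rightarrow> 'k rvec \<Rightarrow> bool" where
  "xlead p d P v = (xdeg_le p d v \<and> (\<forall>a<p. v (a,d) = coeff (P mod xpow_minus_one p) a))"

lemma xlead_imp_xdeg_le: "xlead p d P v \<Longrightarrow> xdeg_le p d v"
  by (simp add: xlead_def)

lemma xlead_neg: "xlead p d P v \<Longrightarrow> xlead p d (- P) (\<lambda>c. - v c)"
  unfolding xlead_def xdeg_le_def by auto

definition list_xdeg :: "(nat \<times> nat) list \<Rightarrow> nat" where
  "list_xdeg bs = sum_list (map snd bs)"

definition list_gdeg :: "(nat \<times> nat) list \<Rightarrow> nat" where
  "list_gdeg bs = sum_list (map fst bs)"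

abbreviation rbvec :: "nat \<Rightarrow> nat \<times> nat \<Rightarrow> 'k::field rvec" where
  "rbvec p e \<equiv> rmon p (fst e) (snd e)"

locale radford =
  fixes p :: nat
  assumes two_le_p: "2 \<le> p"
begin

lemma p_pos: "0 < p"
  using two_le_p by simp

lemma rmon_apply:
  "a < p \<Longrightarrow> b < p \<Longrightarrow> i < p \<Longrightarrow> j < p \<Longrightarrow> rmon p i j (a,b) = (if a = i \<and> b = j then 1 else 0)"
  by (simp add: rmon_def xexp_def)

lemma rmon_apply_rbasis:
  "e \<in> rbasis p \<Longrightarrow> i < p \<Longrightarrow> j < p \<Longrightarrow> rmon p i j e = (if e = (i,j) then 1 else 0)"
  by (cases e) (auto simp: rbasis_def rmon_apply)

lemma rmon_Suc_g_apply:
  "a < p \<Longrightarrow> b < p \<Longrightarrow> i < p \<Longrightarrow> j < p \<Longrightarrow>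
   rmon p (Suc i) j (a,b) = (if i = (a + p - 1) mod p \<and> j = b then 1 else 0)"
  using add_mod_eq_iff[of i p a 1] two_le_p by (auto simp: rmon_def xexp_def add.commute)

text \<open>The reduction \<open>x\<^sup>p = x\<close> sends \<open>x \<cdot> x\<^sup>p\<^sup>-\<^sup>1\<close> to \<open>x\<^sup>1\<close>.\<close>

lemma rmon_Suc_x_apply:
  "a < p \<Longrightarrow> b < p \<Longrightarrow> i < p \<Longrightarrow> j < p \<Longrightarrow>
   rmon p i (Suc j) (a,b) = (if i = a \<and> (0 < b \<and> j = b - 1 \<or> b = 1 \<and> j = p - 1) then 1 else 0)"
proof (cases "Suc j < p")
  case False
  assume "a < p" "b < p" "i < p" "j < p"
  with False have "j = p - 1" by simp
  thus ?thesis using two_le_p \<open>a < p\<close> \<open>b < p\<close> \<open>i < p\<close> by (auto simp: rmon_def xexp_def)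
qed (auto simp: rmon_def xexp_def)

lemma lmulG_apply:
  assumes "a < p" "b < p"
  shows "lmulG p v (a,b) = v ((a + p - 1) mod p, b)"
proof -
  have "lmulG p v (a,b) = (\<Sum>i<p. \<Sum>j<p. if i = (a + p - 1) mod p \<and> j = b then v (i,j) else 0)"
    unfolding lmulG_def sum_rbasis using assms by (intro sum.cong refl) (simp add: rmon_Suc_g_apply)
  also have "\<dots> = v ((a + p - 1) mod p, b)"
    using assms two_le_p by (intro double_sum_delta) auto
  finally show ?thesis .
qed

lemma lmulX_apply:
  assumes a: "a < p" and b: "b < p"
  shows "lmulX p v (a,b) = (if 0 < b then v (a, b - 1) else 0) + (if b = 1 then v (a, p - 1) else 0)
     + of_nat a * v (a,b) - of_nat ((a + p - 1) mod p) * v ((a + p - 1) mod p, b)"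
proof -
  let ?a' = "(a + p - 1) mod p"
  have "lmulX p v (a,b) = (\<Sum>i<p. \<Sum>j<p. v (i,j) * rmon p i (Suc j) (a,b))
     + (\<Sum>i<p. \<Sum>j<p. v (i,j) * (of_nat i * rmon p i j (a,b)))
     - (\<Sum>i<p. \<Sum>j<p. v (i,j) * (of_nat i * rmon p (Suc i) j (a,b)))"
    unfolding lmulX_def sum_rbasis by (simp add: algebra_simps sum.distrib sum_subtractf)
  also have "(\<Sum>i<p. \<Sum>j<p. v (i,j) * rmon p i (Suc j) (a,b))
     = (\<Sum>i<p. \<Sum>j<p. (if i = a \<and> j = b - 1 then (if 0 < b then v (i,j) else 0) else 0)
          + (if i = a \<and> j = p - 1 then (if b = 1 then v (i,j) else 0) else 0))"
    using a b two_le_p by (intro sum.cong refl) (auto simp: rmon_Suc_x_apply)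
  also have "\<dots> = (if 0 < b then v (a, b - 1) else 0) + (if b = 1 then v (a, p - 1) else 0)"
    using a b two_le_p by (simp add: sum.distrib double_sum_delta)
  also have "(\<Sum>i<p. \<Sum>j<p. v (i,j) * (of_nat i * rmon p i j (a,b)))
     = (\<Sum>i<p. \<Sum>j<p. if i = a \<and> j = b then of_nat i * v (i,j) else 0)"
    using a b by (intro sum.cong refl) (auto simp: rmon_apply)
  also have "\<dots> = of_nat a * v (a,b)"
    using a b by (simp add: double_sum_delta)
  also have "(\<Sum>i<p. \<Sum>j<p. v (i,j) * (of_nat i * rmon p (Suc i) j (a,b)))
     = (\<Sum>i<p. \<Sum>j<p. if i = ?a' \<and> j = b then of_nat i * v (i,j) else 0)"
    using a b by (intro sum.cong refl) (auto simp: rmon_Suc_g_apply)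
  also have "\<dots> = of_nat ?a' * v (?a', b)"
    using b two_le_p by (intro double_sum_delta) auto
  finally show ?thesis .
qed

lemma xdeg_le_lmulG: "xdeg_le p d v \<Longrightarrow> xdeg_le p d (lmulG p v)"
  unfolding xdeg_le_def by (auto simp: lmulG_apply)

lemma xlead_lmulG: "xlead p d P v \<Longrightarrow> d < p \<Longrightarrow> xlead p d (monom 1 1 * P) (lmulG p v)"
  unfolding xlead_def using xdeg_le_lmulG by (auto simp: lmulG_apply coeff_monom_mult_mod_xpow_minus_one)

lemma xdeg_le_lmulX: "xdeg_le p d v \<Longrightarrow> d + 1 < p \<Longrightarrow> xdeg_le p (d + 1) (lmulX p v)"
  unfolding xdeg_le_def by (auto simp: lmulX_apply)

lemma xlead_lmulX: "xlead p d P v \<Longrightarrow> d + 1 < p \<Longrightarrow> xlead p (d + 1) P (lmulX p v)"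
  unfolding xlead_def using xdeg_le_lmulX by (auto simp: lmulX_apply xdeg_le_def)

lemma xdeg_le_lmulG_pow: "xdeg_le p d v \<Longrightarrow> xdeg_le p d ((lmulG p ^^ i) v)"
  by (induction i) (auto intro: xdeg_le_lmulG)

lemma xlead_lmulG_pow:
  assumes "xlead p d P v" and "d < p"
  shows "xlead p d (monom 1 i * P) ((lmulG p ^^ i) v)"
proof (induction i)
  case (Suc i)
  have "xlead p d (monom 1 1 * (monom 1 i * P)) (lmulG p ((lmulG p ^^ i) v))"
    using Suc assms(2) by (rule xlead_lmulG)
  thus ?case by (simp add: mult.assoc[symmetric] mult_monom)
qed (use assms in simp)

lemma xdeg_le_lmulX_pow: "xdeg_le p d v \<Longrightarrow> d + k < p \<Longrightarrow> xdeg_le p (d + k) ((lmulX p ^^ k) v)"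
  by (induction k) (auto dest: xdeg_le_lmulX)

lemma xlead_lmulX_pow: "xlead p d P v \<Longrightarrow> d + k < p \<Longrightarrow> xlead p (d + k) P ((lmulX p ^^ k) v)"
  by (induction k) (auto dest: xlead_lmulX)

lemma rmult_apply:
  "rmult p u v e = (\<Sum>i<p. \<Sum>j<p. u (i,j) * ((lmulG p ^^ i) ((lmulX p ^^ j) v)) e)"
  unfolding rmult_def by (simp add: sum_rbasis)

lemma rmult_summand_eq_0:
  assumes "xdeg_le p d1 u" "xdeg_le p d2 v" "d1 + d2 < p"
    and "i < p" "j < p" "a < p" "e < p" "d2 + j < e \<or> d1 < j"
  shows "u (i,j) * ((lmulG p ^^ i) ((lmulX p ^^ j) v)) (a,e) = 0"
proof (cases "d1 < j")
  case True thus ?thesis using assms unfolding xdeg_le_def by auto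
next
  case False
  hence "xdeg_le p (d2 + j) ((lmulG p ^^ i) ((lmulX p ^^ j) v))"
    using assms by (intro xdeg_le_lmulG_pow xdeg_le_lmulX_pow) auto
  thus ?thesis using assms False unfolding xdeg_le_def by auto
qed

lemma xdeg_le_rmult:
  assumes "xdeg_le p d1 u" "xdeg_le p d2 v" "d1 + d2 < p"
  shows "xdeg_le p (d1 + d2) (rmult p u v)"
  unfolding xdeg_le_def rmult_apply
proof (intro allI impI sum.neutral ballI)
  fix a e i j assume "a < p" "e < p" "d1 + d2 < e" "i \<in> {..<p}" "j \<in> {..<p}"
  moreover have "d2 + j < e \<or> d1 < j" using \<open>d1 + d2 < e\<close> by linarith
  ultimately show "u (i,j) * ((lmulG p ^^ i) ((lmulX p ^^ j) v)) (a,e) = 0"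
    using rmult_summand_eq_0[OF assms] by simp
qed

text \<open>Commuting \<open>x\<close> past \<open>g\<close> only produces terms of lower \<open>x\<close>-degree, so leading parts multiply.\<close>

lemma xlead_rmult:
  assumes u: "xlead p d1 P u" and v: "xlead p d2 Q v" and d: "d1 + d2 < p"
  shows "xlead p (d1 + d2) (P * Q) (rmult p u v)"
proof -
  let ?M = "xpow_minus_one p :: 'a poly" and ?c = "\<lambda>i. coeff (P mod xpow_minus_one p) i"
  note vanish = rmult_summand_eq_0[OF xlead_imp_xdeg_le[OF u] xlead_imp_xdeg_le[OF v] d]
  have "rmult p u v (a, d1 + d2) = coeff ((P * Q) mod ?M) a" if a: "a < p" for a
  proof -
    have "rmult p u v (a, d1 + d2)
        = (\<Sum>i<p. \<Sum>j<p. if j = d1 then ?c i * coeff ((monom 1 i * Q) mod ?M) a else 0)"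
      unfolding rmult_apply
    proof (intro sum.cong refl)
      fix i j assume i: "i \<in> {..<p}" and j: "j \<in> {..<p}"
      show "u (i,j) * ((lmulG p ^^ i) ((lmulX p ^^ j) v)) (a, d1 + d2)
          = (if j = d1 then ?c i * coeff ((monom 1 i * Q) mod ?M) a else 0)"
      proof (cases "j = d1")
        case True
        have "xlead p (d2 + d1) (monom 1 i * Q) ((lmulG p ^^ i) ((lmulX p ^^ d1) v))"
          using v d by (intro xlead_lmulG_pow xlead_lmulX_pow) auto
        thus ?thesis using True u i a unfolding xlead_def by (simp add: add.commute)
      next
        case False
        hence "d2 + j < d1 + d2 \<or> d1 < j" by auto
        thus ?thesis using vanish[of i j a "d1 + d2"] i j a d False by auto
      qed
    qed
    also have "\<dots> = coeff ((\<Sum>i<p. monom (?c i) i * Q) mod ?M) a"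
      using d by (simp add: sum_mod_poly coeff_sum monom_mult_eq_smult[of "?c _"] mod_smult_left)
    also have "(\<Sum>i<p. monom (?c i) i * Q) = (P mod ?M) * Q"
      using two_le_p by (subst (2) mod_xpow_minus_one_eq_sum) (simp_all add: sum_distrib_right)
    finally show ?thesis by (simp add: mod_mult_left_eq)
  qed
  thus ?thesis
    using xdeg_le_rmult[OF xlead_imp_xdeg_le[OF u] xlead_imp_xdeg_le[OF v] d] by (simp add: xlead_def)
qed

lemma xlead_rmon: "a < p \<Longrightarrow> d < p \<Longrightarrow> xlead p d (monom 1 a) (rmon p a d)"
  unfolding xlead_def xdeg_le_def by (auto simp: rmon_apply coeff_monom_mod_xpow_minus_one)

lemma xlead_rone: "xlead p 0 1 (rone p)"
  using xlead_rmon[of 0 0] two_le_p by (simp add: rone_def)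

lemma xlead_rpow: "xlead p d P v \<Longrightarrow> d * k < p \<Longrightarrow> xlead p (d * k) (P ^ k) (rpow p v k)"
proof (induction k)
  case (Suc k)
  have "xlead p (d + d * k) (P * P ^ k) (rmult p v (rpow p v k))"
    using Suc by (intro xlead_rmult) auto
  thus ?case by (simp add: rpow_def)
qed (simp add: rpow_def xlead_rone)

lemma xlead_rprod:
  "set bs \<subseteq> rbasis p \<Longrightarrow> list_xdeg bs < p \<Longrightarrow>
   xlead p (list_xdeg bs) (monom 1 (list_gdeg bs)) (rprod p bs :: 'k::field rvec)"
proof (induction bs)
  case (Cons b bs)
  have "xlead p (snd b + list_xdeg bs) (monom 1 (fst b) * monom 1 (list_gdeg bs))
          (rmult p (rbvec p b) (rprod p bs) :: 'k rvec)"
    using Cons two_le_p by (intro xlead_rmult xlead_rmon) (auto simp: rbasis_def list_xdeg_def)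
  thus ?case by (simp add: list_xdeg_def list_gdeg_def mult_monom)
qed (simp add: list_xdeg_def list_gdeg_def xlead_rone two_le_p)

lemma rmult_rbvec_apply:
  assumes "a \<in> rbasis p" "c \<in> rbasis p" "e \<in> rbasis p" "snd a + snd c < p" "snd a + snd c \<le> snd e"
  shows "(rmult p (rbvec p a) (rbvec p c) e :: 'k::field)
       = (if e = ((fst a + fst c) mod p, snd a + snd c) then 1 else 0)"
proof -
  have "xlead p (snd a + snd c) (monom 1 (fst a) * monom 1 (fst c)) (rmult p (rbvec p a) (rbvec p c) :: 'k rvec)"
    using assms two_le_p by (intro xlead_rmult xlead_rmon) (auto simp: rbasis_def)
  thus ?thesis using assms two_le_p unfolding xlead_def xdeg_le_def
    by (cases e) (auto simp: rbasis_def mult_monom coeff_monom_mod_xpow_minus_one le_less)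
qed

text \<open>\<open>S(g\<^sup>a x\<^sup>b) = S(x)\<^sup>b S(g)\<^sup>a\<close> with \<open>S(g) = g\<^sup>p\<^sup>-\<^sup>1\<close> and \<open>S(x) = - g\<^sup>p\<^sup>-\<^sup>1 x\<close>, so its leading part is
  \<open>(-1)\<^sup>b g\<^sup>-\<^sup>(\<^sup>a\<^sup>+\<^sup>b\<^sup>)\<close>.\<close>

lemma xlead_antipode_rmon:
  assumes "b < p"
  shows "xlead p b (smult ((-1) ^ b) (monom (1::'k::field) ((p - 1) * (b + a))))
           (rmult p (rpow p (\<lambda>c. - rmon p (p - 1) 1 c) b) (rpow p (rmon p (p - 1) 0) a))"
proof -
  have eq: "(- monom 1 (p - 1)) ^ b * monom 1 (p - 1) ^ a
      = smult ((-1) ^ b) (monom (1::'k) ((p - 1) * (b + a)))"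
    unfolding distrib_left by (simp add: neg_monom_power monom_power mult_monom mult.commute add.commute)
  have "xlead p (1 * b + 0 * a) ((- monom 1 (p - 1)) ^ b * monom (1::'k) (p - 1) ^ a)
          (rmult p (rpow p (\<lambda>c. - rmon p (p - 1) 1 c) b) (rpow p (rmon p (p - 1) 0) a))"
    using assms two_le_p by (intro xlead_rmult xlead_rpow xlead_neg xlead_rmon) auto
  thus ?thesis unfolding eq by simp
qed

lemma rS_apply:
  assumes w: "xlead p d Q w" and d: "d < p" and i: "i < p"
  shows "rS p w (i,d) = (-1) ^ d * coeff ((monom 1 (i + d) * Q) mod xpow_minus_one p) 0"
proof -
  let ?T = "\<lambda>a b. rmult p (rpow p (\<lambda>c. - rmon p (p - 1) 1 c) b) (rpow p (rmon p (p - 1) 0) a)"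
  let ?c = "\<lambda>a. coeff (Q mod xpow_minus_one p) a"
  have "rS p w (i,d) = (\<Sum>a<p. \<Sum>b<p. w (a,b) * ?T a b (i,d))"
    unfolding rS_def by (simp add: sum_rbasis)
  also have "\<dots> = (\<Sum>a<p. \<Sum>b<p. if b = d then (-1) ^ d * ?c a * (if (i + d + a) mod p = 0 then 1 else 0) else 0)"
  proof (intro sum.cong refl)
    fix a b assume a: "a \<in> {..<p}" and b: "b \<in> {..<p}"
    have T: "?T a b (i,b) = (-1) ^ b * (if (i + b + a) mod p = 0 then 1 else 0)"
      using xlead_antipode_rmon[of b a] b i two_le_p pred_mult_mod_eq_iff[OF i, of "b + a"]
      by (auto simp: xlead_def mod_smult_left coeff_monom_mod_xpow_minus_one add.assoc)
    consider "b < d" | "b = d" | "d < b" by linarith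
    thus "w (a,b) * ?T a b (i,d) = (if b = d then (-1) ^ d * ?c a * (if (i + d + a) mod p = 0 then 1 else 0) else 0)"
    proof cases
      case 1 thus ?thesis using xlead_antipode_rmon[of b a] a b i d unfolding xlead_def xdeg_le_def by auto
    next
      case 2 thus ?thesis using w a T unfolding xlead_def by auto
    next
      case 3 thus ?thesis using w a b unfolding xlead_def xdeg_le_def by auto
    qed
  qed
  also have "\<dots> = (-1) ^ d * (\<Sum>a<p. if a = (p - (i + d) mod p) mod p then ?c a else 0)"
  proof -
    have "(i + d + a) mod p = 0 \<longleftrightarrow> a = (p - (i + d) mod p) mod p" if "a < p" for a
      using add_mod_eq_iff[of a p 0 "i + d"] that two_le_p by simp
    hence "(\<Sum>a<p. (-1) ^ d * ?c a * (if (i + d + a) mod p = 0 then 1 else 0))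
        = (\<Sum>a<p. (-1) ^ d * (if a = (p - (i + d) mod p) mod p then ?c a else 0))"
      by (intro sum.cong refl) auto
    thus ?thesis using d two_le_p by (simp add: sum_distrib_left[symmetric])
  qed
  also have "\<dots> = (-1) ^ d * coeff ((monom 1 (i + d) * Q) mod xpow_minus_one p) 0"
    using two_le_p by (simp add: coeff_monom_mult_mod_xpow_minus_one)
  finally show ?thesis .
qed

end

section \<open>Leading parts of tensors\<close>

text \<open>\<open>teval p u h d T\<close> is the image of the part of \<open>T \<in> R(p) \<otimes> R(p)\<close> of total \<open>x\<close>-degree \<open>d\<close> under
  \<open>g \<otimes> 1 \<mapsto> u\<close>, \<open>x \<otimes> 1 \<mapsto> h\<close>, \<open>1 \<otimes> g \<mapsto> X\<close>, \<open>1 \<otimes> x \<mapsto> 1\<close>. With \<open>u = X\<^sup>m\<close> and \<open>h = 1 + X + \<dots> + X\<^sup>m\<^sup>-\<^sup>1\<close>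
  it records the leading part of \<open>m\<^sup>(\<^sup>m\<^sup>) \<circ> \<Delta>\<^sup>(\<^sup>m\<^sup>)\<close> on the first factor.\<close>

definition tweight :: "'k::field poly \<Rightarrow> 'k poly \<Rightarrow> nat \<times> nat \<Rightarrow> nat \<times> nat \<Rightarrow> 'k poly" where
  "tweight u h e f = monom 1 (fst f) * u ^ fst e * h ^ snd e"

definition teval :: "nat \<Rightarrow> 'k::field poly \<Rightarrow> 'k poly \<Rightarrow> nat \<Rightarrow> 'k rtens \<Rightarrow> 'k poly" where
  "teval p u h d T = (\<Sum>e\<in>rbasis p. \<Sum>f\<in>rbasis p.
      if snd e + snd f = d then smult (T (e,f)) (tweight u h e f) else 0)"

definition txdeg_le :: "nat \<Rightarrow> nat \<Rightarrow> 'k::field rtens \<Rightarrow> bool" where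
  "txdeg_le p d T = (\<forall>e\<in>rbasis p. \<forall>f\<in>rbasis p. d < snd e + snd f \<longrightarrow> T (e,f) = 0)"

definition txlead :: "nat \<Rightarrow> 'k::field poly \<Rightarrow> 'k poly \<Rightarrow> nat \<Rightarrow> 'k poly \<Rightarrow> 'k rtens \<Rightarrow> bool" where
  "txlead p u h d Q T = (txdeg_le p d T \<and> teval p u h d T mod xpow_minus_one p = Q mod xpow_minus_one p)"

definition tdelta :: "nat \<times> nat \<Rightarrow> nat \<times> nat \<Rightarrow> 'k::field rtens" where
  "tdelta E F = (\<lambda>(e,f). if e = E \<and> f = F then 1 else 0)"

lemma teval_sum: "teval p u h d (\<lambda>x. \<Sum>i\<in>I. F i x) = (\<Sum>i\<in>I. teval p u h d (F i))"
proof -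
  have "teval p u h d (\<lambda>x. \<Sum>i\<in>I. F i x) = (\<Sum>e\<in>rbasis p. \<Sum>f\<in>rbasis p. \<Sum>i\<in>I.
      if snd e + snd f = d then smult (F i (e,f)) (tweight u h e f) else 0)"
    unfolding teval_def by (intro sum.cong refl) (simp add: smult_sum)
  also have "\<dots> = (\<Sum>i\<in>I. \<Sum>e\<in>rbasis p. \<Sum>f\<in>rbasis p.
      if snd e + snd f = d then smult (F i (e,f)) (tweight u h e f) else 0)"
    by (simp only: sum.swap[of _ I])
  finally show ?thesis unfolding teval_def .
qed

lemma teval_smult: "teval p u h d (\<lambda>x. c * F x) = smult c (teval p u h d F)"
  unfolding teval_def by (simp add: smult_sum_right if_distrib cong: if_cong)

lemma teval_add: "teval p u h d (\<lambda>x. A x + B x) = teval p u h d A + teval p u h d B"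
  unfolding teval_def sum.distrib[symmetric] by (intro sum.cong refl) (simp add: smult_add_left)

lemma teval_cong:
  "(\<And>e f. e \<in> rbasis p \<Longrightarrow> f \<in> rbasis p \<Longrightarrow> T (e,f) = T' (e,f)) \<Longrightarrow> teval p u h d T = teval p u h d T'"
  unfolding teval_def by (intro sum.cong refl) auto

lemma teval_tdelta:
  "E \<in> rbasis p \<Longrightarrow> F \<in> rbasis p \<Longrightarrow>
   teval p u h d (tdelta E F) = (if snd E + snd F = d then tweight u h E F else 0)"
proof -
  assume EF: "E \<in> rbasis p" "F \<in> rbasis p"
  have "teval p u h d (tdelta E F) = (\<Sum>e\<in>rbasis p. \<Sum>f\<in>rbasis p.
      if e = E \<and> f = F \<and> snd E + snd F = d then tweight u h E F else 0)"
    unfolding teval_def tdelta_def by (intro sum.cong refl) auto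
  also have "\<dots> = (if snd E + snd F = d then tweight u h E F else 0)"
    using EF by (intro double_sum_delta_set) (simp_all add: finite_rbasis)
  finally show ?thesis .
qed

lemma tmult_expand:
  "tmult p U V = (\<lambda>x. \<Sum>a\<in>rbasis p. \<Sum>b\<in>rbasis p. \<Sum>c\<in>rbasis p. \<Sum>d\<in>rbasis p.
     (U (a,b) * V (c,d)) * (\<lambda>(e,f). rmult p (rbvec p a) (rbvec p c) e * rmult p (rbvec p b) (rbvec p d) f) x)"
  by (rule ext) (auto simp: tmult_def mult.assoc)

lemma txdeg_le_nonzero:
  "txdeg_le p d T \<Longrightarrow> e \<in> rbasis p \<Longrightarrow> f \<in> rbasis p \<Longrightarrow> T (e,f) \<noteq> 0 \<Longrightarrow> snd e + snd f \<le> d"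
  unfolding txdeg_le_def by force

context radford
begin

lemma rmult_rbvec_pair_apply:
  assumes B: "a \<in> rbasis p" "b \<in> rbasis p" "c \<in> rbasis p" "d \<in> rbasis p" "e \<in> rbasis p" "f \<in> rbasis p"
    and s1: "snd a + snd b \<le> d1" and s2: "snd c + snd d \<le> d2" and dd: "d1 + d2 < p"
    and ef: "d1 + d2 \<le> snd e + snd f"
  shows "(rmult p (rbvec p a) (rbvec p c) e * rmult p (rbvec p b) (rbvec p d) f :: 'k::field)
       = (if e = ((fst a + fst c) mod p, snd a + snd c) \<and> f = ((fst b + fst d) mod p, snd b + snd d)
             \<and> snd a + snd b = d1 \<and> snd c + snd d = d2 then 1 else 0)"
proof -
  have lt: "snd a + snd c < p" "snd b + snd d < p" using s1 s2 dd by auto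
  consider "snd a + snd c \<le> snd e" "snd b + snd d \<le> snd f"
    | "snd e < snd a + snd c" "snd b + snd d < snd f"
    | "snd f < snd b + snd d" "snd a + snd c < snd e"
    using s1 s2 ef by linarith
  thus ?thesis
  proof cases
    case 1 thus ?thesis using two_le_p B lt s1 s2 ef
      by (auto simp: rmult_rbvec_apply[OF B(1,3,5)] rmult_rbvec_apply[OF B(2,4,6)])
  next
    case 2 thus ?thesis using B lt by (auto simp: rmult_rbvec_apply[OF B(2,4,6)])
  next
    case 3 thus ?thesis using B lt by (auto simp: rmult_rbvec_apply[OF B(1,3,5)])
  qed
qed

lemma teval_rmult_rbvec_pair:
  assumes B: "a \<in> rbasis p" "b \<in> rbasis p" "c \<in> rbasis p" "d \<in> rbasis p"
    and s1: "snd a + snd b \<le> d1" and s2: "snd c + snd d \<le> d2" and dd: "d1 + d2 < p"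
  shows "teval p u h (d1 + d2) (\<lambda>(e,f). (rmult p (rbvec p a) (rbvec p c) e :: 'k::field)
                                           * rmult p (rbvec p b) (rbvec p d) f)
       = (if snd a + snd b = d1 \<and> snd c + snd d = d2
          then tweight u h ((fst a + fst c) mod p, snd a + snd c) ((fst b + fst d) mod p, snd b + snd d)
          else 0)"
proof -
  define E0 where "E0 = ((fst a + fst c) mod p, snd a + snd c)"
  define F0 where "F0 = ((fst b + fst d) mod p, snd b + snd d)"
  let ?C = "snd a + snd b = d1 \<and> snd c + snd d = d2"
  have E0F0: "E0 \<in> rbasis p" "F0 \<in> rbasis p"
    using two_le_p s1 s2 dd by (auto simp: E0_def F0_def rbasis_def)
  have "teval p u h (d1 + d2) (\<lambda>(e,f). (rmult p (rbvec p a) (rbvec p c) e :: 'k)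
                                       * rmult p (rbvec p b) (rbvec p d) f)
      = (\<Sum>e\<in>rbasis p. \<Sum>f\<in>rbasis p. if e = E0 \<and> f = F0 \<and> ?C then tweight u h E0 F0 else 0)"
    unfolding teval_def
  proof (intro sum.cong refl)
    fix e f assume "e \<in> rbasis p" "f \<in> rbasis p"
    with rmult_rbvec_pair_apply[OF B this s1 s2 dd] s1 s2
    show "(if snd e + snd f = d1 + d2 then smult ((\<lambda>(e,f). rmult p (rbvec p a) (rbvec p c) e
            * rmult p (rbvec p b) (rbvec p d) f) (e,f)) (tweight u h e f) else 0)
        = (if e = E0 \<and> f = F0 \<and> ?C then tweight u h E0 F0 else (0 :: 'k poly))"
      by (auto simp: E0_def F0_def)
  qed
  also have "\<dots> = (if ?C then tweight u h E0 F0 else 0)"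
    using E0F0 by (intro double_sum_delta_set) (simp_all add: finite_rbasis)
  finally show ?thesis by (simp add: E0_def F0_def)
qed

lemma tweight_mod:
  assumes "u ^ p mod xpow_minus_one p = (1::'k::field poly)"
  shows "tweight u h ((fst a + fst c) mod p, snd a + snd c) ((fst b + fst d) mod p, snd b + snd d)
           mod xpow_minus_one p
       = (tweight u h a b * tweight u h c d) mod xpow_minus_one p"
proof -
  have p: "0 < p" using two_le_p by simp
  have "u ^ p mod xpow_minus_one p = 1 mod xpow_minus_one p"
    using assms one_mod_xpow_minus_one[OF p] by simp
  hence "u ^ ((fst a + fst c) mod p) mod xpow_minus_one p = u ^ (fst a + fst c) mod xpow_minus_one p"
    using power_mod_periodic by metis
  moreover have "monom (1::'k) ((fst b + fst d) mod p) mod xpow_minus_one p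
               = monom 1 (fst b + fst d) mod xpow_minus_one p"
    by (simp add: monom_mod_xpow_minus_one[OF p])
  ultimately have "tweight u h ((fst a + fst c) mod p, snd a + snd c) ((fst b + fst d) mod p, snd b + snd d)
           mod xpow_minus_one p
      = (monom 1 (fst b + fst d) * u ^ (fst a + fst c) * h ^ (snd a + snd c)) mod xpow_minus_one p"
    unfolding tweight_def fst_conv snd_conv by (intro mod_mult_cong refl)
  also have "monom 1 (fst b + fst d) * u ^ (fst a + fst c) * h ^ (snd a + snd c)
      = tweight u h a b * tweight u h c d"
  proof -
    have "monom (1::'k) (fst b + fst d) = monom 1 (fst b) * monom 1 (fst d)" by (simp add: mult_monom)
    thus ?thesis unfolding tweight_def power_add by (simp only: mult_ac)
  qed
  finally show ?thesis .
qed

lemma txdeg_le_tmult: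
  assumes U: "txdeg_le p d1 U" and V: "txdeg_le p d2 V" and dd: "d1 + d2 < p"
  shows "txdeg_le p (d1 + d2) (tmult p U V :: 'k::field rtens)"
  unfolding txdeg_le_def
proof (intro ballI impI)
  fix e f assume e: "e \<in> rbasis p" and f: "f \<in> rbasis p" and lt: "d1 + d2 < snd e + snd f"
  have "(U (a,b) * V (c,d)) * (rmult p (rbvec p a) (rbvec p c) e * rmult p (rbvec p b) (rbvec p d) f) = 0"
    if B: "a \<in> rbasis p" "b \<in> rbasis p" "c \<in> rbasis p" "d \<in> rbasis p" for a b c d
  proof (cases "U (a,b) = 0 \<or> V (c,d) = 0")
    case False
    hence s: "snd a + snd b \<le> d1" "snd c + snd d \<le> d2"
      using txdeg_le_nonzero[OF U B(1,2)] txdeg_le_nonzero[OF V B(3,4)] by auto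
    have "\<not> (e = ((fst a + fst c) mod p, snd a + snd c) \<and> f = ((fst b + fst d) mod p, snd b + snd d)
        \<and> snd a + snd b = d1 \<and> snd c + snd d = d2)"
      using lt by auto
    hence "rmult p (rbvec p a) (rbvec p c) e * rmult p (rbvec p b) (rbvec p d) f = (0::'k)"
      unfolding rmult_rbvec_pair_apply[OF B e f s dd less_imp_le[OF lt]] by (rule if_not_P)
    thus ?thesis by simp
  qed auto
  thus "tmult p U V (e,f) = 0"
    unfolding tmult_expand by (intro sum.neutral ballI) simp
qed

lemma teval_tmult_mod:
  assumes up: "u ^ p mod xpow_minus_one p = (1::'k::field poly)"
    and U: "txdeg_le p d1 U" and V: "txdeg_le p d2 V" and dd: "d1 + d2 < p"
  shows "teval p u h (d1 + d2) (tmult p U V) mod xpow_minus_one p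
       = (teval p u h d1 U * teval p u h d2 V) mod xpow_minus_one p"
proof -
  let ?B = "rbasis p" and ?M = "xpow_minus_one p :: 'k poly"
  let ?W = "\<lambda>a b c d. if snd a + snd b = d1 \<and> snd c + snd d = d2
                       then tweight u h a b * tweight u h c d else 0"
  have "teval p u h (d1 + d2) (tmult p U V) mod ?M = (\<Sum>a\<in>?B. \<Sum>b\<in>?B. \<Sum>c\<in>?B. \<Sum>d\<in>?B.
     smult (U (a,b) * V (c,d)) (teval p u h (d1 + d2)
       (\<lambda>(e,f). rmult p (rbvec p a) (rbvec p c) e * rmult p (rbvec p b) (rbvec p d) f) mod ?M))"
    unfolding tmult_expand by (simp only: teval_sum teval_smult sum_mod_poly mod_smult_left)
  also have "\<dots> = (\<Sum>a\<in>?B. \<Sum>b\<in>?B. \<Sum>c\<in>?B. \<Sum>d\<in>?B. smult (U (a,b) * V (c,d)) (?W a b c d mod ?M))"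
  proof (intro sum.cong refl)
    fix a b c d assume B: "a \<in> ?B" "b \<in> ?B" "c \<in> ?B" "d \<in> ?B"
    show "smult (U (a,b) * V (c,d)) (teval p u h (d1 + d2)
            (\<lambda>(e,f). rmult p (rbvec p a) (rbvec p c) e * rmult p (rbvec p b) (rbvec p d) f) mod ?M)
        = smult (U (a,b) * V (c,d)) (?W a b c d mod ?M)"
    proof (cases "U (a,b) = 0 \<or> V (c,d) = 0")
      case False
      hence "snd a + snd b \<le> d1" "snd c + snd d \<le> d2"
        using txdeg_le_nonzero[OF U B(1,2)] txdeg_le_nonzero[OF V B(3,4)] by auto
      thus ?thesis by (simp add: teval_rmult_rbvec_pair[OF B _ _ dd] tweight_mod[OF up])
    qed auto
  qed
  also have "\<dots> = (\<Sum>a\<in>?B. \<Sum>b\<in>?B. \<Sum>c\<in>?B. \<Sum>d\<in>?B. smult (U (a,b) * V (c,d)) (?W a b c d)) mod ?M"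
    by (simp only: sum_mod_poly mod_smult_left)
  also have "(\<Sum>a\<in>?B. \<Sum>b\<in>?B. \<Sum>c\<in>?B. \<Sum>d\<in>?B. smult (U (a,b) * V (c,d)) (?W a b c d))
      = teval p u h d1 U * teval p u h d2 V"
    unfolding teval_def sum_product_sum_sum
    by (intro sum.cong refl) (auto simp: mult_smult_left mult_smult_right mult.commute)
  finally show ?thesis .
qed

text \<open>\<open>teval\<close> is multiplicative on leading parts because \<open>u\<^sup>p = 1\<close> matches the relation \<open>g\<^sup>p = 1\<close>.\<close>

lemma txlead_tmult:
  assumes "u ^ p mod xpow_minus_one p = (1::'k::field poly)"
    and "txlead p u h d1 Q1 U" and "txlead p u h d2 Q2 V" and "d1 + d2 < p"
  shows "txlead p u h (d1 + d2) (Q1 * Q2) (tmult p U V)"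
proof -
  have "teval p u h (d1 + d2) (tmult p U V) mod xpow_minus_one p = (Q1 * Q2) mod xpow_minus_one p"
    using assms by (auto simp: txlead_def teval_tmult_mod intro: mod_mult_cong)
  thus ?thesis using assms by (auto simp: txlead_def intro: txdeg_le_tmult)
qed

lemma txlead_unit: "txlead p u h 0 1 (rtensor (rone p) (rone p) :: 'k::field rtens)"
proof -
  have B: "(0,0) \<in> rbasis p" using two_le_p by (simp add: rbasis_def)
  have eq: "rtensor (rone p) (rone p) (e,f) = (tdelta (0,0) (0,0) (e,f) :: 'k)"
    if "e \<in> rbasis p" "f \<in> rbasis p" for e f
    using that by (simp add: rtensor_def rone_def rmon_apply_rbasis tdelta_def p_pos)
  have "teval p u h 0 (rtensor (rone p) (rone p) :: 'k rtens) = teval p u h 0 (tdelta (0,0) (0,0))"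
    using eq by (rule teval_cong)
  hence "teval p u h 0 (rtensor (rone p) (rone p) :: 'k rtens) = 1"
    using teval_tdelta[OF B B, of u h 0] by (simp add: tweight_def)
  moreover have "txdeg_le p 0 (rtensor (rone p) (rone p) :: 'k rtens)"
    unfolding txdeg_le_def using eq by (auto simp: tdelta_def)
  ultimately show ?thesis by (simp add: txlead_def)
qed

lemma txlead_DeltaG: "txlead p u h 0 (monom 1 1 * u) (DeltaG p :: 'k::field rtens)"
proof -
  have B: "(1,0) \<in> rbasis p" using two_le_p by (simp add: rbasis_def)
  have eq: "DeltaG p (e,f) = (tdelta (1,0) (1,0) (e,f) :: 'k)" if "e \<in> rbasis p" "f \<in> rbasis p" for e f
    using that two_le_p by (simp add: DeltaG_def rtensor_def rG_def rmon_apply_rbasis tdelta_def)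
  have "teval p u h 0 (DeltaG p :: 'k rtens) = teval p u h 0 (tdelta (1,0) (1,0))"
    using eq by (rule teval_cong)
  hence "teval p u h 0 (DeltaG p :: 'k rtens) = monom 1 1 * u"
    using teval_tdelta[OF B B, of u h 0] by (simp add: tweight_def)
  moreover have "txdeg_le p 0 (DeltaG p :: 'k rtens)"
    unfolding txdeg_le_def using eq by (auto simp: tdelta_def)
  ultimately show ?thesis by (simp add: txlead_def)
qed

lemma txlead_DeltaX: "txlead p u h 1 (h + u) (DeltaX p :: 'k::field rtens)"
proof -
  have B: "(1,0) \<in> rbasis p" "(0,1) \<in> rbasis p" "(0,0) \<in> rbasis p" using two_le_p by (auto simp: rbasis_def)
  have eq: "DeltaX p (e,f) = (tdelta (0,1) (0,0) (e,f) + tdelta (1,0) (0,1) (e,f) :: 'k)"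
    if "e \<in> rbasis p" "f \<in> rbasis p" for e f
    using that two_le_p by (simp add: DeltaX_def rtensor_def rG_def rX_def rone_def rmon_apply_rbasis tdelta_def)
  have "teval p u h 1 (DeltaX p :: 'k rtens) = teval p u h 1 (\<lambda>x. tdelta (0,1) (0,0) x + tdelta (1,0) (0,1) x)"
    using eq by (rule teval_cong)
  also have "\<dots> = h + u"
    unfolding teval_add using teval_tdelta[OF B(2) B(3), of u h 1] teval_tdelta[OF B(1) B(2), of u h 1]
    by (simp add: tweight_def)
  finally have "teval p u h 1 (DeltaX p :: 'k rtens) = h + u" .
  moreover have "txdeg_le p 1 (DeltaX p :: 'k rtens)"
    unfolding txdeg_le_def using eq by (auto simp: tdelta_def)
  ultimately show ?thesis by (simp add: txlead_def)
qed

lemma txlead_tpow: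
  assumes "u ^ p mod xpow_minus_one p = (1::'k::field poly)" and "txlead p u h d P T"
  shows "d * k < p \<Longrightarrow> txlead p u h (d * k) (P ^ k) (tpow p T k)"
proof (induction k)
  case (Suc k)
  have "txlead p u h (d + d * k) (P * P ^ k) (tmult p T (tpow p T k))"
    using Suc assms by (intro txlead_tmult) auto
  thus ?case by (simp add: tpow_def)
qed (simp add: tpow_def txlead_unit)

lemma rDelta_rmon:
  assumes "a < p" "d < p"
  shows "rDelta p (rmon p a d) = (tmult p (tpow p (DeltaG p) a) (tpow p (DeltaX p) d) :: 'k::field rtens)"
proof
  fix x
  have "rDelta p (rmon p a d) x = (\<Sum>i<p. \<Sum>j<p. if i = a \<and> j = d then
      (tmult p (tpow p (DeltaG p) i) (tpow p (DeltaX p) j) x :: 'k) else 0)"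
    unfolding rDelta_def sum_rbasis using assms by (intro sum.cong refl) (auto simp: rmon_apply)
  also have "\<dots> = tmult p (tpow p (DeltaG p) a) (tpow p (DeltaX p) d) x"
    using assms by (rule double_sum_delta)
  finally show "rDelta p (rmon p a d) x = (tmult p (tpow p (DeltaG p) a) (tpow p (DeltaX p) d) x :: 'k)" .
qed

lemma txlead_rDelta_rmon:
  assumes "u ^ p mod xpow_minus_one p = (1::'k::field poly)" and "a < p" "d < p"
  shows "txlead p u h d ((monom 1 1 * u) ^ a * (h + u) ^ d) (rDelta p (rmon p a d) :: 'k rtens)"
proof -
  have "txlead p u h (0 * a + 1 * d) ((monom 1 1 * u) ^ a * (h + u) ^ d)
          (tmult p (tpow p (DeltaG p) a) (tpow p (DeltaX p) d) :: 'k rtens)"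
    using assms by (intro txlead_tmult txlead_tpow txlead_DeltaG txlead_DeltaX) auto
  thus ?thesis unfolding rDelta_rmon[OF assms(2,3)] by simp
qed

end

section \<open>Iterated comultiplication and Sweedler powers\<close>

definition rlists :: "nat \<Rightarrow> nat \<Rightarrow> (nat \<times> nat) list set" where
  "rlists p m = {bs. set bs \<subseteq> rbasis p \<and> length bs = m}"

lemma rlists_Suc: "rlists p (Suc m) = (\<lambda>(bs,l). bs @ [l]) ` (rlists p m \<times> rbasis p)"
proof
  show "rlists p (Suc m) \<subseteq> (\<lambda>(bs,l). bs @ [l]) ` (rlists p m \<times> rbasis p)"
  proof
    fix xs assume xs: "xs \<in> rlists p (Suc m)"
    hence "xs \<noteq> []" by (auto simp: rlists_def)
    with xs have "xs = butlast xs @ [last xs]" "(butlast xs, last xs) \<in> rlists p m \<times> rbasis p"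
      by (auto simp: rlists_def dest: in_set_butlastD)
    thus "xs \<in> (\<lambda>(bs,l). bs @ [l]) ` (rlists p m \<times> rbasis p)" by force
  qed
qed (auto simp: rlists_def)

lemma sum_rlists_Suc: "(\<Sum>bs\<in>rlists p (Suc m). f bs) = (\<Sum>bs\<in>rlists p m. \<Sum>l\<in>rbasis p. f (bs @ [l]))"
proof -
  have "inj_on (\<lambda>(bs,l). bs @ [l]) (rlists p m \<times> rbasis p)"
    by (auto simp: inj_on_def)
  thus ?thesis unfolding rlists_Suc
    by (simp add: sum.reindex sum.cartesian_product[symmetric] prod.case_distrib)
qed

lemma list_xdeg_snoc: "list_xdeg (bs @ [l]) = list_xdeg bs + snd l"
  by (simp add: list_xdeg_def)

lemma list_gdeg_snoc: "list_gdeg (bs @ [l]) = list_gdeg bs + fst l"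
  by (simp add: list_gdeg_def)

text \<open>For \<open>T \<in> R(p)\<^sup>\<otimes>\<^sup>m\<close>, \<open>leval p m d T\<close> collects the basis tensors of total \<open>x\<close>-degree \<open>d\<close>, each
  weighted by the leading part \<open>g\<^sup>\<Sigma>\<^sup>i\<close> of its product (cf. \<open>xlead_rprod\<close>).\<close>

definition leval :: "nat \<Rightarrow> nat \<Rightarrow> nat \<Rightarrow> ((nat \<times> nat) list \<Rightarrow> 'k::field) \<Rightarrow> 'k poly" where
  "leval p m d T = (\<Sum>bs\<in>rlists p m. if list_xdeg bs = d then smult (T bs) (monom 1 (list_gdeg bs)) else 0)"

definition lxlead :: "nat \<Rightarrow> nat \<Rightarrow> nat \<Rightarrow> 'k::field poly \<Rightarrow> ((nat \<times> nat) list \<Rightarrow> 'k) \<Rightarrow> bool" where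
  "lxlead p m d Q T = ((\<forall>bs\<in>rlists p m. d < list_xdeg bs \<longrightarrow> T bs = 0)
                       \<and> leval p m d T mod xpow_minus_one p = Q mod xpow_minus_one p)"

lemma leval_one:
  "leval p 1 d T = (\<Sum>l\<in>rbasis p. if snd l = d then smult (T [l]) (monom 1 (fst l)) else 0)"
proof -
  have "rlists p 0 = {[]}" by (auto simp: rlists_def)
  thus ?thesis unfolding leval_def One_nat_def sum_rlists_Suc
    by (simp add: list_xdeg_def list_gdeg_def cong: if_cong)
qed

definition geom_poly :: "nat \<Rightarrow> 'k::field poly" where
  "geom_poly m = (\<Sum>k<m. monom 1 k)"

lemma poly_geom_poly_1: "poly (geom_poly m :: 'k::field poly) 1 = of_nat m"
  by (simp add: geom_poly_def poly_sum poly_monom)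

text \<open>In the following lemmas \<open>F (bs @ [l]) = \<Sum>\<^sub>c D(c,l) T c bs\<close> is one step of
  \<open>\<Delta>\<^sup>(\<^sup>m\<^sup>+\<^sup>1\<^sup>) = (\<Delta>\<^sup>(\<^sup>m\<^sup>) \<otimes> id) \<circ> \<Delta>\<close>, with \<open>D\<close> standing for \<open>\<Delta>(v)\<close> and \<open>T c\<close> for \<open>\<Delta>\<^sup>(\<^sup>m\<^sup>)(c)\<close>.\<close>

lemma comult_step_vanishes:
  assumes D: "txdeg_le p d D"
    and T: "\<And>c bs. c \<in> rbasis p \<Longrightarrow> bs \<in> rlists p m \<Longrightarrow> snd c < list_xdeg bs \<Longrightarrow> T c bs = 0"
    and F: "\<And>bs l. bs \<in> rlists p m \<Longrightarrow> l \<in> rbasis p \<Longrightarrow> F (bs @ [l]) = (\<Sum>c\<in>rbasis p. D (c,l) * T c bs)"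
  shows "\<forall>bs\<in>rlists p (Suc m). d < list_xdeg bs \<longrightarrow> F bs = (0::'k::field)"
proof (intro ballI impI)
  fix bs' assume "bs' \<in> rlists p (Suc m)" and lt: "d < list_xdeg bs'"
  then obtain bs l where e: "bs' = bs @ [l]" and bs: "bs \<in> rlists p m" and l: "l \<in> rbasis p"
    unfolding rlists_Suc by auto
  have zero: "D (c,l) * T c bs = 0" if c: "c \<in> rbasis p" for c
  proof (cases "d < snd c + snd l")
    case True thus ?thesis using D c l by (simp add: txdeg_le_def)
  next
    case False
    hence "snd c < list_xdeg bs" using lt e by (simp add: list_xdeg_snoc)
    thus ?thesis using T[OF c bs] by simp
  qed
  show "F bs' = 0" unfolding e F[OF bs l] using zero by (intro sum.neutral) blast
qed

lemma sum_rlists_comult_term: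
  assumes D: "txdeg_le p d D"
    and T: "\<And>c bs. c \<in> rbasis p \<Longrightarrow> bs \<in> rlists p m \<Longrightarrow> snd c < list_xdeg bs \<Longrightarrow> T c bs = 0"
    and c: "c \<in> rbasis p" and l: "l \<in> rbasis p"
  shows "(\<Sum>bs\<in>rlists p m. if list_xdeg bs + snd l = d
            then smult (D (c,l) * T c bs) (monom 1 (list_gdeg bs + fst l)) else 0)
       = (if snd c + snd l = d
          then smult (D (c,l)) (monom 1 (fst l) * leval p m (snd c) (T c)) else (0::'k::field poly))"
    (is "(\<Sum>bs\<in>rlists p m. ?S bs) = _")
proof -
  consider "d < snd c + snd l" | "snd c + snd l < d" | "snd c + snd l = d" by linarith
  thus ?thesis
  proof cases
    case 1
    hence "?S bs = 0" for bs using D c l by (simp add: txdeg_le_def)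
    thus ?thesis using 1 by simp
  next
    case 2
    hence "?S bs = 0" if "bs \<in> rlists p m" for bs using T[OF c that] by auto
    thus ?thesis using 2 by simp
  next
    case 3
    have "(\<Sum>bs\<in>rlists p m. ?S bs) = (\<Sum>bs\<in>rlists p m. smult (D (c,l)) (monom 1 (fst l)
        * (if list_xdeg bs = snd c then smult (T c bs) (monom 1 (list_gdeg bs)) else 0)))"
      using 3 by (intro sum.cong refl) (auto simp: mult_monom add.commute)
    thus ?thesis using 3 unfolding leval_def by (simp add: smult_sum_right sum_distrib_left)
  qed
qed

lemma leval_comult_step:
  assumes D: "txdeg_le p d D"
    and T: "\<And>c bs. c \<in> rbasis p \<Longrightarrow> bs \<in> rlists p m \<Longrightarrow> snd c < list_xdeg bs \<Longrightarrow> T c bs = 0"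
    and F: "\<And>bs l. bs \<in> rlists p m \<Longrightarrow> l \<in> rbasis p \<Longrightarrow> F (bs @ [l]) = (\<Sum>c\<in>rbasis p. D (c,l) * T c bs)"
  shows "leval p (Suc m) d F = (\<Sum>c\<in>rbasis p. \<Sum>l\<in>rbasis p.
     if snd c + snd l = d then smult (D (c,l)) (monom 1 (fst l) * leval p m (snd c) (T c)) else (0::'k::field poly))"
proof -
  let ?S = "\<lambda>c l bs. if list_xdeg bs + snd l = d
                     then smult (D (c,l) * T c bs) (monom 1 (list_gdeg bs + fst l)) else 0"
  have "leval p (Suc m) d F = (\<Sum>bs\<in>rlists p m. \<Sum>l\<in>rbasis p. \<Sum>c\<in>rbasis p. ?S c l bs)"
    unfolding leval_def sum_rlists_Suc list_xdeg_snoc list_gdeg_snoc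
  proof (intro sum.cong refl)
    fix bs l assume "bs \<in> rlists p m" "l \<in> rbasis p"
    thus "(if list_xdeg bs + snd l = d then smult (F (bs @ [l])) (monom 1 (list_gdeg bs + fst l)) else 0)
        = (\<Sum>c\<in>rbasis p. ?S c l bs)"
      by (cases "list_xdeg bs + snd l = d") (simp_all add: F smult_sum)
  qed
  also have "\<dots> = (\<Sum>c\<in>rbasis p. \<Sum>l\<in>rbasis p. \<Sum>bs\<in>rlists p m. ?S c l bs)"
    by (rule triple_sum_reverse)
  also have "\<dots> = (\<Sum>c\<in>rbasis p. \<Sum>l\<in>rbasis p.
     if snd c + snd l = d then smult (D (c,l)) (monom 1 (fst l) * leval p m (snd c) (T c)) else 0)"
    by (intro sum.cong refl) (rule sum_rlists_comult_term[OF D T])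
  finally show ?thesis .
qed

lemma lxlead_comult_step:
  assumes D: "txlead p (monom 1 m) (geom_poly m) d R D"
    and T: "\<And>c. c \<in> rbasis p \<Longrightarrow> lxlead p m (snd c) (monom 1 (m * fst c) * geom_poly m ^ snd c) (T c)"
    and F: "\<And>bs l. bs \<in> rlists p m \<Longrightarrow> l \<in> rbasis p \<Longrightarrow> F (bs @ [l]) = (\<Sum>c\<in>rbasis p. D (c,l) * T c bs)"
  shows "lxlead p (Suc m) d R (F :: _ \<Rightarrow> 'k::field)"
proof -
  have Ddeg: "txdeg_le p d D" using D by (simp add: txlead_def)
  have Tdeg: "T c bs = 0" if "c \<in> rbasis p" "bs \<in> rlists p m" "snd c < list_xdeg bs" for c bs
    using T[OF that(1)] that(2,3) by (auto simp: lxlead_def)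
  have step: "leval p (Suc m) d F = (\<Sum>c\<in>rbasis p. \<Sum>l\<in>rbasis p.
     if snd c + snd l = d then smult (D (c,l)) (monom 1 (fst l) * leval p m (snd c) (T c)) else 0)"
    by (rule leval_comult_step[OF Ddeg Tdeg F])
  have "leval p (Suc m) d F mod xpow_minus_one p = teval p (monom 1 m) (geom_poly m) d D mod xpow_minus_one p"
    unfolding step teval_def sum_mod_poly
  proof (intro sum.cong refl)
    fix c l assume c: "c \<in> rbasis p" and l: "l \<in> rbasis p"
    have "(monom 1 (fst l) * leval p m (snd c) (T c)) mod xpow_minus_one p
        = (monom 1 (fst l) * (monom 1 (m * fst c) * geom_poly m ^ snd c)) mod xpow_minus_one p"
      using T[OF c] by (intro mod_mult_cong refl) (simp add: lxlead_def)
    also have "monom 1 (fst l) * (monom 1 (m * fst c) * geom_poly m ^ snd c) = tweight (monom 1 m) (geom_poly m) c l"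
      by (simp add: tweight_def monom_power mult.assoc mult.commute)
    finally show "(if snd c + snd l = d then smult (D (c,l)) (monom 1 (fst l) * leval p m (snd c) (T c)) else 0)
        mod xpow_minus_one p
      = (if snd c + snd l = d then smult (D (c,l)) (tweight (monom 1 m) (geom_poly m) c l) else 0)
        mod xpow_minus_one p"
      by (simp add: mod_smult_left)
  qed
  thus ?thesis using D comult_step_vanishes[OF Ddeg Tdeg F] by (simp add: lxlead_def txlead_def)
qed

context radford
begin

lemma xlead_sweedler_sum:
  fixes T :: "(nat \<times> nat) list \<Rightarrow> 'k::field"
  assumes T: "lxlead p m d Q T" and d: "d < p"
  shows "xlead p d Q (\<lambda>b. \<Sum>bs\<in>rlists p m. T bs * rprod p bs b)"
proof -
  have T0: "T bs = 0" if "bs \<in> rlists p m" "d < list_xdeg bs" for bs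
    using T that by (auto simp: lxlead_def)
  have lead: "xlead p (list_xdeg bs) (monom 1 (list_gdeg bs)) (rprod p bs :: 'k rvec)"
    if "bs \<in> rlists p m" "list_xdeg bs \<le> d" for bs
    using that d by (intro xlead_rprod) (auto simp: rlists_def)
  have summand: "T bs * rprod p bs (a,j)
      = (if list_xdeg bs = j then T bs * coeff (monom 1 (list_gdeg bs) mod xpow_minus_one p) a else 0)"
    if "bs \<in> rlists p m" "a < p" "j < p" "d \<le> j" for bs a j
  proof -
    consider "d < list_xdeg bs" | "list_xdeg bs \<le> d" "list_xdeg bs < j" | "list_xdeg bs = j" "j = d"
      using \<open>d \<le> j\<close> by linarith
    thus ?thesis
      by cases (use T0 lead that in \<open>auto simp: xlead_def xdeg_le_def\<close>)
  qed
  have "(\<Sum>bs\<in>rlists p m. T bs * rprod p bs (a,j)) = 0" if "a < p" "j < p" "d < j" for a j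
    using that by (intro sum.neutral) (auto simp: summand T0)
  moreover have "(\<Sum>bs\<in>rlists p m. T bs * rprod p bs (a,d)) = coeff (Q mod xpow_minus_one p) a"
    if "a < p" for a
  proof -
    have "(\<Sum>bs\<in>rlists p m. T bs * rprod p bs (a,d)) = coeff (leval p m d T mod xpow_minus_one p) a"
      unfolding leval_def sum_mod_poly coeff_sum using that d
      by (intro sum.cong refl) (simp add: summand mod_smult_left)
    thus ?thesis using T by (simp add: lxlead_def)
  qed
  ultimately show ?thesis by (simp add: xlead_def xdeg_le_def)
qed

lemma lxlead_rDeltan_one:
  assumes "a < p" "d < p"
  shows "lxlead p 1 d (monom 1 a) (rDeltan p 1 (rmon p a d) :: _ \<Rightarrow> 'k::field)"
proof -
  have val: "rDeltan p 1 (rmon p a d) [l] = (if l = (a,d) then 1 else (0::'k))" if "l \<in> rbasis p" for l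
    using that assms by (auto simp: rbasis_def rmon_apply split: if_splits)
  have rlists_one: "rlists p 1 = (\<lambda>l. [l]) ` rbasis p"
    by (auto simp: rlists_def length_Suc_conv)
  have "leval p 1 d (rDeltan p 1 (rmon p a d) :: _ \<Rightarrow> 'k) = (\<Sum>l\<in>rbasis p.
      if snd l = d then smult (rDeltan p 1 (rmon p a d) [l]) (monom 1 (fst l)) else 0)"
    by (rule leval_one)
  also have "\<dots> = (\<Sum>l\<in>rbasis p. if l = (a,d) then monom 1 a else 0)"
    by (intro sum.cong refl) (auto simp: val rmon_apply_rbasis assms)
  also have "\<dots> = monom 1 a" using assms by (simp add: rbasis_def)
  moreover have "\<forall>bs\<in>rlists p 1. d < list_xdeg bs \<longrightarrow> (rDeltan p 1 (rmon p a d) bs :: 'k) = 0"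
    unfolding rlists_one using val by (auto simp: list_xdeg_def)
  ultimately show ?thesis by (simp add: lxlead_def)
qed

lemma lxlead_rDeltan:
  "0 < m \<Longrightarrow> a < p \<Longrightarrow> d < p \<Longrightarrow>
   lxlead p m d (monom 1 (m * a) * geom_poly m ^ d) (rDeltan p m (rmon p a d) :: _ \<Rightarrow> 'k::field)"
proof (induction m arbitrary: a d rule: nat_induct_non_zero)
  case 1
  have "geom_poly 1 = (1 :: 'k poly)" by (simp add: geom_poly_def)
  thus ?case using lxlead_rDeltan_one[OF 1] by (simp only: mult_1 mult_1_right power_one)
next
  case (Suc m)
  have up: "monom 1 m ^ p mod xpow_minus_one p = (1 :: 'k poly)"
    using monom_mod_xpow_minus_one[OF p_pos, of "m * p"] by (simp add: monom_power)
  have "(monom 1 1 * monom 1 m) ^ a * (geom_poly m + monom 1 m) ^ d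
      = (monom 1 (Suc m * a) * geom_poly (Suc m) ^ d :: 'k poly)"
    by (simp add: mult_monom monom_power geom_poly_def mult.commute)
  moreover obtain k where "m = Suc k" using Suc.hyps by (cases m) auto
  ultimately show ?case
    using txlead_rDelta_rmon[OF up Suc.prems, of "geom_poly m"]
  proof (intro lxlead_comult_step[where T = "\<lambda>c. rDeltan p m (rbvec p c)"])
    fix c assume "c \<in> rbasis p"
    thus "lxlead p m (snd c) (monom 1 (m * fst c) * geom_poly m ^ snd c) (rDeltan p m (rbvec p c) :: _ \<Rightarrow> 'k)"
      using Suc.IH Suc.hyps by (auto simp: rbasis_def)
  qed simp_all
qed

lemma reps_rmon:
  assumes "i < p" "j < p"
  shows "reps p (rmon p i j) = (if j = 0 then 1 else (0::'k::field))"
proof -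
  have "reps p (rmon p i j) = (\<Sum>a<p. \<Sum>b<p. if a = i \<and> b = j then (if b = 0 then 1 else (0::'k)) else 0)"
    unfolding reps_def sum_rbasis using assms by (intro sum.cong refl) (auto simp: rmon_apply)
  also have "\<dots> = (if j = 0 then 1 else 0)"
    using assms by (rule double_sum_delta[where f = "\<lambda>a b. if b = 0 then 1 else 0"])
  finally show ?thesis .
qed

lemma xlead_rP:
  assumes "i < p" "j < p"
  shows "xlead p j (monom 1 (m * i) * geom_poly m ^ j) (rP p m (rmon p i j) :: 'k::field rvec)"
proof (cases "m = 0")
  case True
  thus ?thesis using assms xlead_rone
    by (cases "j = 0") (auto simp: rP_def reps_rmon geom_poly_def xlead_def xdeg_le_def power_0_left)
next
  case False
  have "rP p m (rmon p i j) = (\<lambda>b. \<Sum>bs\<in>rlists p m. rDeltan p m (rmon p i j) bs * rprod p bs b :: 'k)"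
    using False by (simp add: rP_def rlists_def)
  thus ?thesis using False assms by (simp add: xlead_sweedler_sum lxlead_rDeltan)
qed

lemma rS_rP_diagonal:
  assumes "i < p" "j < p"
  shows "(rS p (rP p m (rmon p i j)) (i,j) :: 'k::field)
       = (-1) ^ j * coeff ((monom 1 (Suc m * i) * (monom 1 j * geom_poly m ^ j)) mod xpow_minus_one p) 0"
proof -
  have eq: "monom 1 (i + j) * (monom 1 (m * i) * geom_poly m ^ j)
      = monom 1 (Suc m * i) * (monom (1::'k) j * geom_poly m ^ j)"
  proof -
    have "i + j + m * i = Suc m * i + j" by simp
    hence "monom (1::'k) (i + j) * monom 1 (m * i) = monom 1 (Suc m * i) * monom 1 j"
      by (simp only: mult_monom mult_1)
    thus ?thesis by (simp only: mult.assoc[symmetric])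
  qed
  show ?thesis unfolding eq[symmetric] by (rule rS_apply[OF xlead_rP[OF assms] assms(2,1)])
qed

lemma radford_indicator_Suc:
  "(radford_indicator p (Suc m) :: 'k::field) = (\<Sum>j<p. (-1) ^ j * coeff
      (((\<Sum>i<p. monom 1 (Suc m * i)) * (monom 1 j * geom_poly m ^ j)) mod xpow_minus_one p) 0)"
proof -
  have "(radford_indicator p (Suc m) :: 'k) = (\<Sum>i<p. \<Sum>j<p. (-1) ^ j * coeff
      ((monom 1 (Suc m * i) * (monom 1 j * geom_poly m ^ j)) mod xpow_minus_one p) 0)"
    unfolding radford_indicator_def rtrace_def sum_rbasis by (simp add: rS_rP_diagonal)
  also have "\<dots> = (\<Sum>j<p. \<Sum>i<p. (-1) ^ j * coeff
      ((monom 1 (Suc m * i) * (monom 1 j * geom_poly m ^ j)) mod xpow_minus_one p) 0)"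
    by (rule sum.swap)
  also have "\<dots> = (\<Sum>j<p. (-1) ^ j * coeff
      (((\<Sum>i<p. monom 1 (Suc m * i)) * (monom 1 j * geom_poly m ^ j)) mod xpow_minus_one p) 0)"
    by (simp only: sum_distrib_right[of "\<lambda>i. monom 1 (Suc m * i)"] sum_mod_poly coeff_sum sum_distrib_left)
  finally show ?thesis .
qed

lemma radford_indicator_Suc_char:
  assumes "prime p" and "CHAR('k::field) = p"
  shows "(radford_indicator p (Suc m) :: 'k) = (if p dvd Suc m then 0 else (\<Sum>j<p. (- of_nat m) ^ j))"
proof -
  let ?M = "xpow_minus_one p :: 'k poly" and ?E = "\<Sum>i<p. monom 1 (Suc m * i) :: 'k poly"
  have indicator: "(radford_indicator p (Suc m) :: 'k)
      = (\<Sum>j<p. (-1) ^ j * coeff (((?E mod ?M) * (monom 1 j * geom_poly m ^ j)) mod ?M) 0)"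
    by (simp add: radford_indicator_Suc mod_mult_left_eq)
  show ?thesis
  proof (cases "p dvd Suc m")
    case True
    hence "?E mod ?M = of_nat p"
      using sum_monom_mult_mod_xpow_minus_one[OF assms(1), of "Suc m"] by simp
    also have "\<dots> = 0"
      using assms(2) by (simp add: of_nat_eq_0_iff_char_dvd)
    finally show ?thesis using True indicator by simp
  next
    case False
    hence E: "?E mod ?M = norm_poly p"
      using sum_monom_mult_mod_xpow_minus_one[OF assms(1), of "Suc m"] by simp
    have "coeff ((norm_poly p * (monom 1 j * geom_poly m ^ j)) mod ?M) 0 = of_nat m ^ j" for j
      by (simp add: norm_poly_mult_mod[OF p_pos] coeff_norm_poly_0[OF p_pos] poly_geom_poly_1 poly_monom)
    hence "(radford_indicator p (Suc m) :: 'k) = (\<Sum>j<p. (-1) ^ j * of_nat m ^ j)"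
      unfolding indicator E by simp
    also have "\<dots> = (\<Sum>j<p. (- of_nat m) ^ j)"
      by (simp only: power_minus[of "of_nat m"])
    finally show ?thesis using False by simp
  qed
qed

end

theorem theorem3p3:
  fixes p n :: nat
  assumes "prime p"
    and "CHAR('k::alg_closed_field) = p"
    and "n > 0"
  shows "(radford_indicator p n :: 'k) = (if p dvd n then 0 else 1)"
proof -
  interpret radford p
    using assms(1) by unfold_locales (simp add: prime_ge_2_nat)
  obtain m where n: "n = Suc m" using assms(3) by (cases n) auto
  have "(- of_nat m :: 'k) ^ p = - of_nat m"
    using neg_of_nat_power_CHAR[of m, where 'a = 'k] assms(1,2) by simp
  moreover have "(- of_nat m :: 'k) \<noteq> 1" if "\<not> p dvd n"
    using that assms(2) n of_nat_eq_0_iff_char_dvd[of n, where 'a = 'k]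
    by (metis add.commute eq_neg_iff_add_eq_0 of_nat_Suc)
  ultimately show ?thesis
    using radford_indicator_Suc_char[OF assms(1,2), of m] n by (simp add: sum_powers_of_fixed_point)
qed

end
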